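(* Let $D\subset\mathbb N^n$ be finite, not contained in any coordinate hyperplane, $p$ a prime, $k\ge1$, and let $\mathbf e_{-1},\mathbf e_0,\dots,\mathbf e_{k-1}\in\Sigma_p(D)$ (not necessarily distinct) with $V(\mathbf e_i,\mathbf e_{i-1})\ne\emptyset$ for $0\le i\le k-1$. For every $(V_i)_{0\le i\le k-1}\in\prod_{i=0}^{k-1}V(\mathbf e_i,\mathbf e_{i-1})$, $V_i=(v_{i\mathbf d})_{\mathbf d}$, there is a minimal $U=(u_{\mathbf d})\in E_{D,p}(r)$ for some $r\ge k$ such that for each $\mathbf d$ the remainder of $u_{\mathbf d}$ modulo $p^k$ is $\sum_{i=0}^{k-1}p^iv_{i\mathbf d}$, and $\varphi_U(i)=\mathbf e_{r-1-i}$ for all $r-k\le i\le r$.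
   Context: $s_p$ = base-$p$ digit sum. $E_{D,p}(r)$ = set of $U=(u_{\mathbf d})\in\{0,\dots,p^r-1\}^D$ with $\sum u_{\mathbf d}\mathbf d\equiv0\pmod{p^r-1}$ and all coordinates of $\sum u_{\mathbf d}\mathbf d$ positive; $s_p(U)=\sum s_p(u_{\mathbf d})$; $\delta_p(D)=\frac1{p-1}\min_{r\ge1}\min_{U\in E_{D,p}(r)}s_p(U)/r$; minimal means $s_p(U)=(p-1)r\delta_p(D)$. Shift $\delta_r$: $k\mapsto pk\bmod(p^r-1)$ for $k\le p^r-2$, $p^r-1\mapsto p^r-1$, coordinatewise. $\varphi_U(j)=\frac1{p^r-1}\sum\mathbf d(\delta_r^jU)_{\mathbf d}$ for $j\in\mathbb Z/r\mathbb Z$ (indices mod $r$); irreducible means $\varphi_U$ injective; $MI_{D,p}$ = minimal irreducible elements of all lengths; $\Sigma_p(D)=\bigcup_{U\in MI_{D,p}}\mathrm{Im}\varphi_U$. $\psi(U)=(u_{\mathbf d}\bmod p)_{\mathbf d}$; $V(\mathbf e,\mathbf e')=\{\psi(U):U\in MI_{D,p},\varphi_U(-1)=\mathbf e,\varphi_U(0)=\mathbf e'\}$. *)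

theory Defs
  imports "HOL-Analysis.Finite_Cartesian_Product" "HOL-Computational_Algebra.Primes"
begin

text \<open>Base-p digit sum s_p (for p \<ge> 2 the terms with i beyond the length vanish).\<close>
definition digsum :: "nat \<Rightarrow> nat \<Rightarrow> nat" where
  "digsum p u = (\<Sum>i<Suc u. (u div p ^ i) mod p)"

text \<open>Tuples U = (u_d)_{d \<in> D} are functions on vectors, zero outside D.\<close>
definition Eset :: "(nat ^ 'n) set \<Rightarrow> nat \<Rightarrow> nat \<Rightarrow> ((nat ^ 'n) \<Rightarrow> nat) set" where
  "Eset D p r = {U. (\<forall>d\<in>D. U d \<le> p ^ r - 1) \<and> (\<forall>d. d \<notin> D \<longrightarrow> U d = 0)
      \<and> (\<forall>j. (p ^ r - 1) dvd (\<Sum>d\<in>D. U d * d $ j))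
      \<and> (\<forall>j. 0 < (\<Sum>d\<in>D. U d * d $ j))}"

definition sU :: "(nat ^ 'n) set \<Rightarrow> nat \<Rightarrow> ((nat ^ 'n) \<Rightarrow> nat) \<Rightarrow> nat" where
  "sU D p U = (\<Sum>d\<in>D. digsum p (U d))"

definition delta :: "(nat ^ 'n) set \<Rightarrow> nat \<Rightarrow> real" where
  "delta D p = (1 / (real p - 1)) *
     Inf {real (sU D p U) / real r | r U. r \<ge> 1 \<and> U \<in> Eset D p r}"

definition minimal :: "(nat ^ 'n) set \<Rightarrow> nat \<Rightarrow> nat \<Rightarrow> ((nat ^ 'n) \<Rightarrow> nat) \<Rightarrow> bool" where
  "minimal D p r U \<longleftrightarrow> r \<ge> 1 \<and> U \<in> Eset D p r \<and>
     real (sU D p U) = (real p - 1) * real r * delta D p"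

definition shift :: "nat \<Rightarrow> nat \<Rightarrow> nat \<Rightarrow> nat" where
  "shift p r k = (if k = p ^ r - 1 then k else (p * k) mod (p ^ r - 1))"

definition shiftU :: "nat \<Rightarrow> nat \<Rightarrow> ((nat ^ 'n) \<Rightarrow> nat) \<Rightarrow> ((nat ^ 'n) \<Rightarrow> nat)" where
  "shiftU p r U = (\<lambda>d. shift p r (U d))"

text \<open>phi_U(j) for j in Z/rZ, represented by an integer j taken modulo r.\<close>
definition phi :: "(nat ^ 'n) set \<Rightarrow> nat \<Rightarrow> nat \<Rightarrow> ((nat ^ 'n) \<Rightarrow> nat) \<Rightarrow> int \<Rightarrow> nat ^ 'n" where
  "phi D p r U j = (\<chi> i. (\<Sum>d\<in>D. ((shiftU p r ^^ nat (j mod int r)) U) d * d $ i) div (p ^ r - 1))"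

definition irreducible_U :: "(nat ^ 'n) set \<Rightarrow> nat \<Rightarrow> nat \<Rightarrow> ((nat ^ 'n) \<Rightarrow> nat) \<Rightarrow> bool" where
  "irreducible_U D p r U \<longleftrightarrow> inj_on (phi D p r U) {0..<int r}"

definition MI :: "(nat ^ 'n) set \<Rightarrow> nat \<Rightarrow> (nat \<times> ((nat ^ 'n) \<Rightarrow> nat)) set" where
  "MI D p = {(r, U). minimal D p r U \<and> irreducible_U D p r U}"

definition Sigma_p :: "(nat ^ 'n) set \<Rightarrow> nat \<Rightarrow> (nat ^ 'n) set" where
  "Sigma_p D p = (\<Union>(r, U)\<in>MI D p. range (phi D p r U))"

definition psi :: "nat \<Rightarrow> ((nat ^ 'n) \<Rightarrow> nat) \<Rightarrow> ((nat ^ 'n) \<Rightarrow> nat)" where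
  "psi p U = (\<lambda>d. U d mod p)"

definition Vset :: "(nat ^ 'n) set \<Rightarrow> nat \<Rightarrow> nat ^ 'n \<Rightarrow> nat ^ 'n \<Rightarrow> ((nat ^ 'n) \<Rightarrow> nat) set" where
  "Vset D p e e' = {psi p U | r U. (r, U) \<in> MI D p \<and> phi D p r U (-1) = e \<and> phi D p r U 0 = e'}"

end

theory Submission imports Defs begin

(* For each i < k choose a minimal U_i of some length r_i with psi U_i = V_i,
   phi_(U_i) (-1) = e_i and phi_(U_i) 0 = e_(i-1).  Reading the digits of an element U of E(r)
   from the top, the values x_j = phi_U j satisfy p x_j = x_(j+1) + \<Sigma>_d (j-th digit of u_d) d,
   i.e. they form a closed walk; conversely every closed walk of this kind starting at a point with
   positive coordinates comes from an element of E(r) whose digit sum is the total weight of the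
   digits used.  The top r_i - 1 digits of U_i lead from e_(i-1) to e_i, and its last digit V_i
   leads back from e_i to e_(i-1).  Going from e_(-1) to e_(k-1) through the top digits of
   U_0, ..., U_(k-1) and back through V_(k-1), ..., V_0 gives a closed walk of length r = \<Sigma> r_i
   and weight \<Sigma> s_p(U_i) = (p - 1) r \<delta>_p(D), i.e. a minimal element of E(r) whose lowest k
   digits are the V_i. *)

(* Digit lists are written most significant digit first, so that the shift map acts as rotate1. *)
fun num_of_digits :: "nat \<Rightarrow> nat list \<Rightarrow> nat" where
  "num_of_digits p [] = 0"
| "num_of_digits p (a # xs) = a * p ^ length xs + num_of_digits p xs"

fun digits :: "nat \<Rightarrow> nat \<Rightarrow> nat \<Rightarrow> nat list" where
  "digits p 0 u = []"
| "digits p (Suc r) u = digits p r (u div p) @ [u mod p]"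

lemma num_of_digits_append:
  "num_of_digits p (xs @ ys) = num_of_digits p xs * p ^ length ys + num_of_digits p ys"
  by (induction xs) (auto simp: algebra_simps power_add)

lemma num_of_digits_less:
  assumes "\<forall>a\<in>set xs. a < p"
  shows "num_of_digits p xs < p ^ length xs"
  using assms
proof (induction xs)
  case (Cons a xs)
  have "num_of_digits p (a # xs) < Suc a * p ^ length xs" using Cons by simp
  also have "\<dots> \<le> p * p ^ length xs" using Cons.prems by (intro mult_le_mono1) auto
  finally show ?case by simp
qed simp

lemma num_of_digits_eq_0: "\<forall>a\<in>set xs. a = 0 \<Longrightarrow> num_of_digits p xs = 0"
  by (induction xs) auto

lemma num_of_digits_rev_map: "num_of_digits p (rev (map f [0..<k])) = (\<Sum>i<k. p ^ i * f i)"
  by (induction k) (auto simp: algebra_simps)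

lemma length_digits [simp]: "length (digits p r u) = r"
  by (induction r arbitrary: u) auto

lemma digits_less: "0 < p \<Longrightarrow> \<forall>a\<in>set (digits p r u). a < p"
  by (induction r arbitrary: u) auto

lemma digits_0: "\<forall>a\<in>set (digits p r 0). a = 0"
  by (induction r) auto

lemma digits_pred:
  "r \<ge> 1 \<Longrightarrow> digits p r u = digits p (r - 1) (u div p) @ [u mod p]"
  by (cases r) auto

lemma num_of_digits_digits:
  assumes "0 < p" "u < p ^ r"
  shows "num_of_digits p (digits p r u) = u"
  using assms
proof (induction r arbitrary: u)
  case (Suc r)
  have "u div p < p ^ r" using Suc.prems by (simp add: less_mult_imp_div_less mult.commute)
  then show ?case using Suc by (simp add: num_of_digits_append)
qed simp

lemma digits_num_of_digits:
  assumes "\<forall>a\<in>set xs. a < p"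
  shows "digits p (length xs) (num_of_digits p xs) = xs"
  using assms
proof (induction xs rule: rev_induct)
  case (snoc a xs)
  then show ?case by (simp add: num_of_digits_append)
qed simp

lemma sum_list_digits: "sum_list (digits p n u) = (\<Sum>i<n. (u div p ^ i) mod p)"
proof (induction n arbitrary: u)
  case (Suc n)
  have "(\<Sum>i<Suc n. (u div p ^ i) mod p) = u mod p + (\<Sum>i<n. ((u div p) div p ^ i) mod p)"
    by (subst sum.lessThan_Suc_shift) (simp add: div_mult2_eq)
  then show ?case using Suc by simp
qed simp

lemma digsum_eq_sum_list_digits:
  assumes p: "2 \<le> p" and u: "u < p ^ r"
  shows "digsum p u = sum_list (digits p r u)"
proof -
  have "u < p ^ u"
    using less_exp[of u] power_mono[of 2 p u] p by linarith
  moreover have "p ^ u \<le> p ^ i \<or> p ^ r \<le> p ^ i" if "Suc u \<le> i \<or> r \<le> i" for i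
    using that p by (auto intro: power_increasing)
  ultimately have zero: "u div p ^ i = 0" if "Suc u \<le> i \<or> r \<le> i" for i
    using that u by (meson div_less less_le_trans)
  have "digsum p u = (\<Sum>i<max (Suc u) r. (u div p ^ i) mod p)"
    unfolding digsum_def using zero by (intro sum.mono_neutral_left) auto
  also have "\<dots> = (\<Sum>i<r. (u div p ^ i) mod p)"
    using zero by (intro sum.mono_neutral_right) auto
  finally show ?thesis by (simp add: sum_list_digits)
qed

lemma mixed_radix_eq_max:
  fixes a b p q :: nat
  assumes "a < p" "b < q"
  shows "a * q + b = p * q - 1 \<longleftrightarrow> a = p - 1 \<and> b = q - 1"
proof
  assume eq: "a * q + b = p * q - 1"
  have "a = p - 1"
  proof (rule ccontr)
    assume "a \<noteq> p - 1"
    then have "Suc a * q \<le> (p - 1) * q" using assms(1) by (intro mult_le_mono1) linarith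
    then have "a * q + b < (p - 1) * q" using assms(2) by simp
    also have "\<dots> \<le> p * q - 1" using assms(2) by (simp add: diff_mult_distrib)
    finally show False using eq by simp
  qed
  moreover have "(p - 1) * q + (q - 1) = p * q - 1" using assms by (simp add: diff_mult_distrib)
  ultimately show "a = p - 1 \<and> b = q - 1" using eq by simp
next
  assume "a = p - 1 \<and> b = q - 1"
  with assms show "a * q + b = p * q - 1" by (simp add: diff_mult_distrib)
qed

lemma shift_num_of_digits:
  assumes p: "2 \<le> p" and ys: "\<forall>a\<in>set ys. a < p" "length ys = r" and r: "r \<ge> 1"
  shows "shift p r (num_of_digits p ys) = num_of_digits p (rotate1 ys)"
proof -
  obtain a zs where ys_eq: "ys = a # zs" using ys r by (cases ys) auto
  define q where "q = p ^ (r - 1)"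
  define N where "N = p ^ r - 1"
  define u where "u = num_of_digits p ys"
  define v where "v = num_of_digits p (rotate1 ys)"
  have pq: "p ^ r = p * q" unfolding q_def using r by (cases r) auto
  have a: "a < p" using ys ys_eq by simp
  have lz: "length zs = r - 1" using ys ys_eq by simp
  then have zs: "num_of_digits p zs < q"
    unfolding q_def using ys ys_eq num_of_digits_less[of zs p] by simp
  have u_eq: "u = a * q + num_of_digits p zs" unfolding u_def q_def ys_eq using lz by simp
  have v_eq: "v = num_of_digits p zs * p + a" unfolding v_def ys_eq by (simp add: num_of_digits_append)
  have "v < p ^ r" unfolding v_def using num_of_digits_less[of "rotate1 ys" p] ys by simp
  then have v_le: "v \<le> N" unfolding N_def by simp
  have v_max: "v = N \<longleftrightarrow> u = N"
    using mixed_radix_eq_max[OF a zs] mixed_radix_eq_max[OF zs a]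
    unfolding u_eq v_eq N_def pq by (auto simp: mult.commute)
  have N1: "N + 1 = p * q" unfolding N_def pq[symmetric] using p by simp
  have "p * u = a * (N + 1) + num_of_digits p zs * p"
    unfolding u_eq N1 by (simp add: algebra_simps)
  then have pu: "p * u = a * N + v" unfolding v_eq by (simp add: algebra_simps)
  show ?thesis
  proof (cases "u = N")
    case True
    then show ?thesis using v_max unfolding shift_def u_def v_def N_def by simp
  next
    case False
    then have "v < N" using v_le v_max by simp
    then have "(p * u) mod N = v" unfolding pu by simp
    then show ?thesis using False unfolding shift_def u_def v_def N_def by simp
  qed
qed

definition walk ::
    "(nat ^ 'n) set \<Rightarrow> nat \<Rightarrow> ((nat ^ 'n) \<Rightarrow> nat list) \<Rightarrow> nat \<Rightarrow> (nat \<Rightarrow> nat ^ 'n) \<Rightarrow> bool" where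
  "walk D p H m x \<longleftrightarrow> (\<forall>d. length (H d) = m) \<and> (\<forall>d. \<forall>a\<in>set (H d). a < p)
     \<and> (\<forall>d. d \<notin> D \<longrightarrow> (\<forall>a\<in>set (H d). a = 0))
     \<and> (\<forall>j<m. \<forall>i. p * x j $ i = x (Suc j) $ i + (\<Sum>d\<in>D. H d ! j * d $ i))"

definition digit_weight :: "(nat ^ 'n) set \<Rightarrow> ((nat ^ 'n) \<Rightarrow> nat list) \<Rightarrow> nat" where
  "digit_weight D H = (\<Sum>d\<in>D. sum_list (H d))"

lemma digit_weight_append:
  "digit_weight D (\<lambda>d. H1 d @ H2 d) = digit_weight D H1 + digit_weight D H2"
  unfolding digit_weight_def by (simp add: sum.distrib)

lemma walk_length: "walk D p H m x \<Longrightarrow> length (H d) = m"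
  unfolding walk_def by blast

lemma walk_digits_less: "walk D p H m x \<Longrightarrow> \<forall>a\<in>set (H d). a < p"
  unfolding walk_def by blast

lemma walk_digits_outside: "walk D p H m x \<Longrightarrow> d \<notin> D \<Longrightarrow> \<forall>a\<in>set (H d). a = 0"
  unfolding walk_def by blast

lemma walk_step:
  "walk D p H m x \<Longrightarrow> j < m \<Longrightarrow> p * x j $ i = x (Suc j) $ i + (\<Sum>d\<in>D. H d ! j * d $ i)"
  unfolding walk_def by blast

lemma walk_append:
  assumes w1: "walk D p H1 m1 x1" and w2: "walk D p H2 m2 x2" and joint: "x1 m1 = x2 0"
  obtains x where "walk D p (\<lambda>d. H1 d @ H2 d) (m1 + m2) x" "x 0 = x1 0"
    "\<And>j. m1 \<le> j \<Longrightarrow> x j = x2 (j - m1)"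
proof
  define x where "x j = (if j \<le> m1 then x1 j else x2 (j - m1))" for j
  have l1: "\<forall>d. length (H1 d) = m1" using walk_length[OF w1] by blast
  have "p * x j $ i = x (Suc j) $ i + (\<Sum>d\<in>D. (H1 d @ H2 d) ! j * d $ i)"
    if j: "j < m1 + m2" for j i
  proof (cases "j < m1")
    case True
    then show ?thesis using w1 l1 unfolding walk_def x_def by (auto simp: nth_append)
  next
    case False
    then have "Suc j - m1 = Suc (j - m1)" "j - m1 < m2" using j by auto
    then show ?thesis using False w2 l1 joint unfolding walk_def x_def by (auto simp: nth_append)
  qed
  then show "walk D p (\<lambda>d. H1 d @ H2 d) (m1 + m2) x" using w1 w2 unfolding walk_def by auto
  show "x 0 = x1 0" unfolding x_def by simp
  show "x j = x2 (j - m1)" if "m1 \<le> j" for j using that joint unfolding x_def by auto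
qed

lemma walk_take:
  "walk D p H m x \<Longrightarrow> n \<le> m \<Longrightarrow> walk D p (\<lambda>d. take n (H d)) n x"
  unfolding walk_def by (auto dest: in_set_takeD)

lemma walk_chain:
  assumes "\<And>i. i < k \<Longrightarrow> \<exists>H m x. walk D p H m x \<and> x 0 = e (int i - 1) \<and> x m = e (int i)
             \<and> real (digit_weight D H) + w i = c * real (Suc m)"
  shows "\<exists>H m x. walk D p H m x \<and> x 0 = e (-1) \<and> x m = e (int k - 1)
           \<and> real (digit_weight D H) + (\<Sum>i<k. w i) = c * real (m + k)"
  using assms
proof (induction k)
  case 0
  have "walk D p (\<lambda>d. []) 0 (\<lambda>_. e (-1))" unfolding walk_def by simp
  then show ?case by (intro exI[of _ "\<lambda>d. []"] exI[of _ 0] exI[of _ "\<lambda>_. e (-1)"])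
                     (simp add: digit_weight_def)
next
  case (Suc k)
  obtain H1 m1 x1 where w1: "walk D p H1 m1 x1" "x1 0 = e (-1)" "x1 m1 = e (int k - 1)"
    and s1: "real (digit_weight D H1) + (\<Sum>i<k. w i) = c * real (m1 + k)"
    using Suc by auto
  obtain H2 m2 x2 where w2: "walk D p H2 m2 x2" "x2 0 = e (int k - 1)" "x2 m2 = e (int k)"
    and s2: "real (digit_weight D H2) + w k = c * real (Suc m2)"
    using Suc.prems[of k] by auto
  obtain x where "walk D p (\<lambda>d. H1 d @ H2 d) (m1 + m2) x" "x 0 = x1 0"
    "\<And>j. m1 \<le> j \<Longrightarrow> x j = x2 (j - m1)"
    using walk_append[OF w1(1) w2(1)] w1(3) w2(2) by metis
  moreover have "real (digit_weight D (\<lambda>d. H1 d @ H2 d)) + (\<Sum>i<Suc k. w i)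
      = c * real (m1 + m2 + Suc k)"
    using s1 s2 by (simp add: digit_weight_append algebra_simps)
  ultimately show ?case using w1(2) w2(3)
    by (intro exI[of _ "\<lambda>d. H1 d @ H2 d"] exI[of _ "m1 + m2"] exI[of _ x]) simp
qed

lemma walk_of_last_digits:
  assumes step: "\<forall>i<k. \<forall>c. p * e (int i) $ c = e (int i - 1) $ c + (\<Sum>d\<in>D. V i d * d $ c)"
    and V: "\<forall>i<k. \<forall>d. V i d < p" "\<forall>i<k. \<forall>d. d \<notin> D \<longrightarrow> V i d = 0"
  shows "walk D p (\<lambda>d. rev (map (\<lambda>i. V i d) [0..<k])) k (\<lambda>j. e (int k - 1 - int j))"
proof -
  have "p * e (int k - 1 - int j) $ c = e (int k - 1 - int (Suc j)) $ c
      + (\<Sum>d\<in>D. rev (map (\<lambda>i. V i d) [0..<k]) ! j * d $ c)" if j: "j < k" for j c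
  proof -
    have i: "int k - 1 - int j = int (k - 1 - j)" "int k - 1 - int (Suc j) = int (k - 1 - j) - 1"
      using j by (simp_all add: of_nat_diff)
    show ?thesis unfolding i using step[rule_format, of "k - 1 - j" c] j by (simp add: rev_nth)
  qed
  then show ?thesis unfolding walk_def using V by auto
qed

lemma shiftU_power_num_of_digits:
  assumes p: "2 \<le> p" and r: "r \<ge> 1"
    and H: "\<forall>d. length (H d) = r" "\<forall>d. \<forall>a\<in>set (H d). a < p"
  shows "(shiftU p r ^^ j) (\<lambda>d. num_of_digits p (H d)) = (\<lambda>d. num_of_digits p (rotate j (H d)))"
proof (induction j)
  case (Suc j)
  have "shiftU p r (\<lambda>d. num_of_digits p (rotate j (H d)))
      = (\<lambda>d. num_of_digits p (rotate (Suc j) (H d)))"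
    unfolding shiftU_def rotate_Suc using H p r by (intro ext shift_num_of_digits) auto
  then show ?case using Suc by simp
qed simp

definition rotation_sum ::
    "(nat ^ 'n) set \<Rightarrow> nat \<Rightarrow> ((nat ^ 'n) \<Rightarrow> nat list) \<Rightarrow> nat \<Rightarrow> 'n \<Rightarrow> nat" where
  "rotation_sum D p H j i = (\<Sum>d\<in>D. num_of_digits p (rotate j (H d)) * d $ i)"

lemma phi_num_of_digits:
  assumes p: "2 \<le> p" and r: "r \<ge> 1"
    and H: "\<forall>d. length (H d) = r" "\<forall>d. \<forall>a\<in>set (H d). a < p"
  shows "phi D p r (\<lambda>d. num_of_digits p (H d)) (int j) $ i = rotation_sum D p H j i div (p ^ r - 1)"
proof -
  have "nat (int j mod int r) = j mod r" by (simp add: zmod_int[symmetric])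
  moreover have "rotate (j mod r) (H d) = rotate j (H d)" for d
    using H by (metis rotate_conv_mod)
  ultimately show ?thesis
    unfolding phi_def rotation_sum_def shiftU_power_num_of_digits[OF p r H] by simp
qed

lemma num_of_digits_rotate_Suc:
  assumes "length ys = r" "r \<ge> 1" "p \<ge> 1"
  shows "p * num_of_digits p (rotate j ys)
       = num_of_digits p (rotate (Suc j) ys) + (p ^ r - 1) * ys ! (j mod r)"
proof -
  have ne: "ys \<noteq> []" using assms by auto
  obtain b ws where ys_j: "rotate j ys = b # ws" using ne by (cases "rotate j ys") auto
  have b: "b = ys ! (j mod r)" using hd_rotate_conv_nth[OF ne, of j] ys_j assms by simp
  have lw: "length ws = r - 1" using ys_j assms by (metis length_Cons length_rotate diff_Suc_1)
  have pr: "p ^ r = p * p ^ (r - 1)" using assms by (cases r) auto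
  obtain P where P: "p ^ r = Suc P" using assms not0_implies_Suc[of "p ^ r"] by auto
  have "p * num_of_digits p (rotate j ys) = b * p ^ r + p * num_of_digits p ws"
    using ys_j lw pr by (simp add: algebra_simps)
  moreover have "b * p ^ r = b + (p ^ r - 1) * b" using P by simp
  moreover have "p * num_of_digits p ws = num_of_digits p ws * p" by simp
  ultimately have "p * num_of_digits p (rotate j ys) = (num_of_digits p ws * p + b) + (p ^ r - 1) * b"
    by linarith
  then show ?thesis using ys_j b by (simp add: rotate_Suc num_of_digits_append mult.commute)
qed

lemma rotation_sum_Suc:
  assumes "\<forall>d. length (H d) = r" "r \<ge> 1" "p \<ge> 1"
  shows "p * rotation_sum D p H j i
       = rotation_sum D p H (Suc j) i + (p ^ r - 1) * (\<Sum>d\<in>D. H d ! (j mod r) * d $ i)"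
proof -
  have "p * rotation_sum D p H j i = (\<Sum>d\<in>D. (p * num_of_digits p (rotate j (H d))) * d $ i)"
    unfolding rotation_sum_def by (simp add: sum_distrib_left algebra_simps)
  also have "\<dots> = (\<Sum>d\<in>D. num_of_digits p (rotate (Suc j) (H d)) * d $ i
                          + (p ^ r - 1) * (H d ! (j mod r) * d $ i))"
    using num_of_digits_rotate_Suc assms by (intro sum.cong) (auto simp: algebra_simps)
  finally show ?thesis unfolding rotation_sum_def by (simp add: sum.distrib sum_distrib_left)
qed

(* The defect \<delta> j below is multiplied by p at each step and returns to its initial value after
   r steps, so it vanishes. *)
lemma closed_walk_rotation_sum:
  assumes p: "2 \<le> p" and r: "r \<ge> 1" and w: "walk D p H r x" and closed: "x r = x 0"
    and j: "j \<le> r"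
  shows "rotation_sum D p H j i = (p ^ r - 1) * x j $ i"
proof -
  define N where "N = p ^ r - 1"
  have len: "\<forall>d. length (H d) = r" using walk_length[OF w] by blast
  define \<delta> where "\<delta> j = int (rotation_sum D p H j i) - int N * int (x j $ i)" for j
  have powers: "\<delta> j = int p ^ j * \<delta> 0" if "j \<le> r" for j
    using that
  proof (induction j)
    case (Suc j)
    let ?W = "\<Sum>d\<in>D. H d ! j * d $ i"
    have "p * rotation_sum D p H j i = rotation_sum D p H (Suc j) i + N * ?W"
      using rotation_sum_Suc[OF len r, of p D j i] p Suc.prems unfolding N_def by simp
    then have rot: "int p * int (rotation_sum D p H j i)
        = int (rotation_sum D p H (Suc j) i) + int N * int ?W"
      by (simp only: of_nat_mult[symmetric] of_nat_add[symmetric] of_nat_eq_iff)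
    have "p * x j $ i = x (Suc j) $ i + ?W" using walk_step[OF w] Suc.prems by simp
    then have "int p * int (x j $ i) = int (x (Suc j) $ i) + int ?W"
      by (simp only: of_nat_mult[symmetric] of_nat_add[symmetric] of_nat_eq_iff)
    with rot have "\<delta> (Suc j) = int p * \<delta> j"
      unfolding \<delta>_def by (simp add: algebra_simps)
    then show ?case using Suc by simp
  qed simp
  have "\<delta> r = \<delta> 0"
    unfolding \<delta>_def rotation_sum_def using len closed by (simp add: rotate_id)
  then have "(int p ^ r - 1) * \<delta> 0 = 0" using powers[of r] by (simp add: algebra_simps)
  moreover have "1 < int p ^ r" using p r by (intro one_less_power) auto
  ultimately have "\<delta> j = 0" using powers[OF j] by simp
  then have "int (rotation_sum D p H j i) = int (N * x j $ i)" unfolding \<delta>_def by simp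
  then show ?thesis unfolding N_def by (simp only: of_nat_eq_iff)
qed

lemma closed_walk_phi:
  assumes p: "2 \<le> p" and r: "r \<ge> 1" and w: "walk D p H r x" and closed: "x r = x 0"
    and j: "j \<le> r"
  shows "phi D p r (\<lambda>d. num_of_digits p (H d)) (int j) = x j"
proof -
  have H: "\<forall>d. length (H d) = r" "\<forall>d. \<forall>a\<in>set (H d). a < p"
    using walk_length[OF w] walk_digits_less[OF w] by blast+
  have N: "0 < p ^ r - 1" using one_less_power[of p r] p r by simp
  show ?thesis
  proof (subst vec_eq_iff, intro allI)
    fix i
    have "phi D p r (\<lambda>d. num_of_digits p (H d)) (int j) $ i = rotation_sum D p H j i div (p ^ r - 1)"
      by (rule phi_num_of_digits[OF p r H])
    also have "\<dots> = x j $ i" using closed_walk_rotation_sum[OF p r w closed j] N by simp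
    finally show "phi D p r (\<lambda>d. num_of_digits p (H d)) (int j) $ i = x j $ i" .
  qed
qed

lemma closed_walk_Eset:
  assumes p: "2 \<le> p" and r: "r \<ge> 1" and w: "walk D p H r x" and closed: "x r = x 0"
    and pos: "\<forall>i. 0 < x 0 $ i"
  shows "(\<lambda>d. num_of_digits p (H d)) \<in> Eset D p r"
proof -
  have less: "num_of_digits p (H d) < p ^ r" for d
    using num_of_digits_less[OF walk_digits_less[OF w]] walk_length[OF w] by simp
  have zero: "num_of_digits p (H d) = 0" if "d \<notin> D" for d
    using num_of_digits_eq_0[OF walk_digits_outside[OF w that]] .
  have sum: "(\<Sum>d\<in>D. num_of_digits p (H d) * d $ i) = (p ^ r - 1) * x 0 $ i" for i
    using closed_walk_rotation_sum[OF p r w closed, of 0 i] unfolding rotation_sum_def by simp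
  have N: "0 < p ^ r - 1" using one_less_power[of p r] p r by simp
  show ?thesis
    unfolding Eset_def
  proof (intro CollectI conjI allI ballI impI)
    show "num_of_digits p (H d) \<le> p ^ r - 1" for d using less[of d] by simp
    show "num_of_digits p (H d) = 0" if "d \<notin> D" for d using zero[OF that] .
    show "(p ^ r - 1) dvd (\<Sum>d\<in>D. num_of_digits p (H d) * d $ i)" for i unfolding sum by simp
    show "0 < (\<Sum>d\<in>D. num_of_digits p (H d) * d $ i)" for i unfolding sum using N pos by simp
  qed
qed

lemma sU_num_of_digits:
  assumes p: "2 \<le> p" and w: "walk D p H r x"
  shows "sU D p (\<lambda>d. num_of_digits p (H d)) = digit_weight D H"
proof -
  have "digsum p (num_of_digits p (H d)) = sum_list (H d)" for d
  proof -
    have H: "length (H d) = r" "\<forall>a\<in>set (H d). a < p"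
      using walk_length[OF w] walk_digits_less[OF w] by blast+
    then have "num_of_digits p (H d) < p ^ r" using num_of_digits_less by blast
    then have "digsum p (num_of_digits p (H d)) = sum_list (digits p r (num_of_digits p (H d)))"
      by (rule digsum_eq_sum_list_digits[OF p])
    then show ?thesis using digits_num_of_digits[OF H(2)] H(1) by simp
  qed
  then show ?thesis unfolding sU_def digit_weight_def by simp
qed

lemma Eset_less:
  assumes "U \<in> Eset D p r" "0 < p"
  shows "U d < p ^ r"
proof (cases "d \<in> D")
  case True
  then have "U d \<le> p ^ r - 1" using assms(1) unfolding Eset_def by blast
  moreover have "0 < p ^ r" using assms(2) by simp
  ultimately show ?thesis by linarith
next
  case False
  then show ?thesis using assms unfolding Eset_def by simp
qed

lemma phi_0_pos:
  assumes "U \<in> Eset D p r"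
  shows "0 < phi D p r U 0 $ i"
proof -
  have pos: "0 < (\<Sum>d\<in>D. U d * d $ i)" and "(p ^ r - 1) dvd (\<Sum>d\<in>D. U d * d $ i)"
    using assms unfolding Eset_def by auto
  then obtain q where q: "(\<Sum>d\<in>D. U d * d $ i) = (p ^ r - 1) * q" by (elim dvdE)
  then have "0 < q" "0 < p ^ r - 1" using pos by auto
  then show ?thesis unfolding phi_def by (simp add: q)
qed

lemma phi_int_pred_length: "r \<ge> 1 \<Longrightarrow> phi D p r U (int (r - 1)) = phi D p r U (-1)"
  unfolding phi_def by (simp add: of_nat_diff zmod_minus1)

lemma phi_int_length: "phi D p r U (int r) = phi D p r U 0"
  unfolding phi_def by simp

lemma Eset_digit_walk:
  assumes p: "2 \<le> p" and r: "r \<ge> 1" and U: "U \<in> Eset D p r"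
  shows "walk D p (\<lambda>d. digits p r (U d)) r (\<lambda>j. phi D p r U (int j))"
proof -
  define H where "H d = digits p r (U d)" for d
  define N where "N = p ^ r - 1"
  have "num_of_digits p (H d) = U d" for d
    unfolding H_def using num_of_digits_digits[OF _ Eset_less[OF U]] p by simp
  then have U_eq: "U = (\<lambda>d. num_of_digits p (H d))" by simp
  have len: "\<forall>d. length (H d) = r" and dig: "\<forall>d. \<forall>a\<in>set (H d). a < p"
    unfolding H_def using digits_less p by auto
  have zero: "\<forall>d. d \<notin> D \<longrightarrow> (\<forall>a\<in>set (H d). a = 0)"
    using U digits_0 unfolding Eset_def H_def by auto
  have N: "0 < N" unfolding N_def using one_less_power[of p r] p r by simp
  have rec: "p * rotation_sum D p H j i = rotation_sum D p H (Suc j) i + N * (\<Sum>d\<in>D. H d ! (j mod r) * d $ i)"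
    for j i using rotation_sum_Suc[OF len r, of p D j i] p unfolding N_def by simp
  have dvd: "N dvd rotation_sum D p H j i" for j i
  proof (induction j)
    case 0
    show ?case using U unfolding rotation_sum_def N_def Eset_def U_eq by simp
  next
    case (Suc j)
    then have "N dvd rotation_sum D p H (Suc j) i + N * (\<Sum>d\<in>D. H d ! (j mod r) * d $ i)"
      unfolding rec[symmetric] by simp
    then show ?case by (simp add: dvd_add_left_iff)
  qed
  have phi_eq: "phi D p r U (int j) $ i = rotation_sum D p H j i div N" for j i
    unfolding U_eq N_def using phi_num_of_digits[OF p r len dig] by simp
  have "p * phi D p r U (int j) $ i = phi D p r U (int (Suc j)) $ i + (\<Sum>d\<in>D. H d ! j * d $ i)"
    if "j < r" for j i
  proof -
    let ?W = "\<Sum>d\<in>D. H d ! j * d $ i"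
    have "p * (rotation_sum D p H j i div N) = (p * rotation_sum D p H j i) div N"
      using dvd by (simp add: div_mult_swap)
    also have "\<dots> = (rotation_sum D p H (Suc j) i + ?W * N) div N"
      using rec[of j i] that by (simp add: mult.commute)
    also have "\<dots> = rotation_sum D p H (Suc j) i div N + ?W" using N by simp
    finally show ?thesis by (simp only: phi_eq)
  qed
  then show ?thesis unfolding walk_def using len dig zero unfolding H_def by auto
qed

lemma Eset_prefix_walk:
  assumes p: "2 \<le> p" and r: "r \<ge> 1" and U: "U \<in> Eset D p r"
  shows "walk D p (\<lambda>d. digits p (r - 1) (U d div p)) (r - 1) (\<lambda>j. phi D p r U (int j))"
  using walk_take[OF Eset_digit_walk[OF p r U], of "r - 1"] digits_pred[OF r] by simp

lemma Eset_last_digit_step: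
  assumes p: "2 \<le> p" and r: "r \<ge> 1" and U: "U \<in> Eset D p r"
  shows "p * phi D p r U (-1) $ i = phi D p r U 0 $ i + (\<Sum>d\<in>D. U d mod p * d $ i)"
proof -
  have "r - 1 < r" "Suc (r - 1) = r" using r by auto
  then have "p * phi D p r U (int (r - 1)) $ i
      = phi D p r U (int r) $ i + (\<Sum>d\<in>D. digits p r (U d) ! (r - 1) * d $ i)"
    using walk_step[OF Eset_digit_walk[OF p r U], of "r - 1" i] by simp
  moreover have "digits p r (U d) ! (r - 1) = U d mod p" for d
    using digits_pred[OF r] by (simp add: nth_append)
  ultimately show ?thesis unfolding phi_int_pred_length[OF r] phi_int_length by simp
qed

lemma sU_split_last_digit:
  assumes p: "2 \<le> p" and r: "r \<ge> 1" and U: "U \<in> Eset D p r"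
  shows "sU D p U = digit_weight D (\<lambda>d. digits p (r - 1) (U d div p)) + (\<Sum>d\<in>D. U d mod p)"
proof -
  have "digsum p (U d) = sum_list (digits p (r - 1) (U d div p)) + U d mod p" for d
    using digsum_eq_sum_list_digits[OF p Eset_less[OF U]] digits_pred[OF r] p by simp
  then show ?thesis unfolding sU_def digit_weight_def by (simp add: sum.distrib)
qed

lemma minimal_prefix_walk:
  assumes p: "2 \<le> p" and "minimal D p r U"
  shows "\<exists>H m x. walk D p H m x \<and> x 0 = phi D p r U 0 \<and> x m = phi D p r U (-1)
           \<and> real (digit_weight D H) + real (\<Sum>d\<in>D. U d mod p) = (real p - 1) * delta D p * real (Suc m)"
proof -
  have r: "r \<ge> 1" and U: "U \<in> Eset D p r"
    and s: "real (sU D p U) = (real p - 1) * real r * delta D p"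
    using assms unfolding minimal_def by auto
  have "Suc (r - 1) = r" using r by simp
  then show ?thesis
    using Eset_prefix_walk[OF p r U] sU_split_last_digit[OF p r U] s phi_int_pred_length[OF r]
    by (intro exI[of _ "\<lambda>d. digits p (r - 1) (U d div p)"] exI[of _ "r - 1"]
          exI[of _ "\<lambda>j. phi D p r U (int j)"]) simp
qed

(* The closing segment uses the digit tuples V (k - 1), ..., V 0, which therefore become the
   k lowest digits of the resulting element. *)
lemma close_walk_by_last_digits:
  assumes p: "2 \<le> p" and k: "k \<ge> 1"
    and P: "walk D p H m x" "x 0 = e (-1)" "x m = e (int k - 1)"
    and pos: "\<forall>i. 0 < e (-1) $ i"
    and step: "\<forall>i<k. \<forall>c. p * e (int i) $ c = e (int i - 1) $ c + (\<Sum>d\<in>D. V i d * d $ c)"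
    and V: "\<forall>i<k. \<forall>d. V i d < p" "\<forall>i<k. \<forall>d. d \<notin> D \<longrightarrow> V i d = 0"
  obtains U where "U \<in> Eset D p (m + k)"
    and "sU D p U = digit_weight D H + (\<Sum>i<k. \<Sum>d\<in>D. V i d)"
    and "\<forall>d. U d mod p ^ k = (\<Sum>i<k. p ^ i * V i d)"
    and "\<forall>i\<in>{int (m + k) - int k..int (m + k)}. phi D p (m + k) U i = e (int (m + k) - 1 - i)"
proof
  define HQ where "HQ d = rev (map (\<lambda>i. V i d) [0..<k])" for d
  have Q: "walk D p HQ k (\<lambda>j. e (int k - 1 - int j))"
    unfolding HQ_def by (rule walk_of_last_digits[OF step V])
  obtain y where W: "walk D p (\<lambda>d. H d @ HQ d) (m + k) y" "y 0 = e (-1)"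
    and y: "\<And>j. m \<le> j \<Longrightarrow> y j = e (int k - 1 - int (j - m))"
    using walk_append[OF P(1) Q] P(2,3) by auto
  have closed: "y (m + k) = y 0" using y[of "m + k"] W(2) by simp
  have mk: "m + k \<ge> 1" using k by simp
  define U where "U d = num_of_digits p (H d @ HQ d)" for d
  have low: "num_of_digits p (HQ d) = (\<Sum>i<k. p ^ i * V i d)" for d
    unfolding HQ_def by (rule num_of_digits_rev_map)
  have "num_of_digits p (HQ d) < p ^ k" for d
    using num_of_digits_less[OF walk_digits_less[OF Q]] walk_length[OF Q] by simp
  then show "\<forall>d. U d mod p ^ k = (\<Sum>i<k. p ^ i * V i d)"
    unfolding U_def by (simp add: num_of_digits_append walk_length[OF Q] flip: low)
  show "U \<in> Eset D p (m + k)"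
    unfolding U_def using closed_walk_Eset[OF p mk W(1) closed] pos W(2) by simp
  have "digit_weight D HQ = (\<Sum>i<k. \<Sum>d\<in>D. V i d)"
    unfolding digit_weight_def HQ_def
    by (simp add: sum_list_rev sum_set_upt_conv_sum_list_nat[symmetric] atLeast0LessThan sum.swap[of _ D])
  then show "sU D p U = digit_weight D H + (\<Sum>i<k. \<Sum>d\<in>D. V i d)"
    unfolding U_def sU_num_of_digits[OF p W(1)] digit_weight_append by simp
  show "\<forall>i\<in>{int (m + k) - int k..int (m + k)}. phi D p (m + k) U i = e (int (m + k) - 1 - i)"
  proof
    fix i assume "i \<in> {int (m + k) - int k..int (m + k)}"
    then have i: "int m \<le> i" "i \<le> int (m + k)" by auto
    define j where "j = nat i"
    have j: "i = int j" "m \<le> j" "j \<le> m + k" using i unfolding j_def by auto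
    have "phi D p (m + k) U (int j) = y j"
      unfolding U_def by (rule closed_walk_phi[OF p mk W(1) closed j(3)])
    also have "\<dots> = e (int (m + k) - 1 - int j)"
      using y[OF j(2)] j(2) by (simp add: of_nat_diff algebra_simps)
    finally show "phi D p (m + k) U i = e (int (m + k) - 1 - i)" using j(1) by simp
  qed
qed

lemma Vset_elim:
  assumes "v \<in> Vset D p a b"
  obtains r U where "minimal D p r U" "v = (\<lambda>d. U d mod p)" "phi D p r U (-1) = a" "phi D p r U 0 = b"
  using assms unfolding Vset_def MI_def psi_def by blast

lemma Vset_prefix_walk:
  assumes "2 \<le> p" "v \<in> Vset D p a b"
  shows "\<exists>H m x. walk D p H m x \<and> x 0 = b \<and> x m = a
           \<and> real (digit_weight D H) + real (\<Sum>d\<in>D. v d) = (real p - 1) * delta D p * real (Suc m)"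
proof -
  obtain r U where "minimal D p r U" "v = (\<lambda>d. U d mod p)" "phi D p r U (-1) = a" "phi D p r U 0 = b"
    using assms(2) by (rule Vset_elim)
  then show ?thesis using minimal_prefix_walk[OF assms(1), of D r U] by simp
qed

lemma Vset_step:
  assumes "2 \<le> p" "v \<in> Vset D p a b"
  shows "p * a $ i = b $ i + (\<Sum>d\<in>D. v d * d $ i)"
proof -
  obtain r U where "minimal D p r U" "v = (\<lambda>d. U d mod p)" "phi D p r U (-1) = a" "phi D p r U 0 = b"
    using assms(2) by (rule Vset_elim)
  then show ?thesis using Eset_last_digit_step[OF assms(1), of r U D i] unfolding minimal_def by simp
qed

lemma Vset_digits:
  assumes "0 < p" "v \<in> Vset D p a b"
  shows "v d < p" and "d \<notin> D \<Longrightarrow> v d = 0"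
proof -
  obtain r U where "minimal D p r U" "v = (\<lambda>d. U d mod p)"
    using assms(2) by (rule Vset_elim)
  then show "v d < p" and "d \<notin> D \<Longrightarrow> v d = 0"
    using assms(1) unfolding minimal_def Eset_def by auto
qed

lemma Vset_pos:
  assumes "v \<in> Vset D p a b"
  shows "0 < b $ i"
proof -
  obtain r U where "minimal D p r U" "phi D p r U 0 = b"
    using assms by (rule Vset_elim)
  then show ?thesis using phi_0_pos[of U D p r i] unfolding minimal_def by simp
qed

theorem lemma2p16:
  fixes D :: "(nat ^ 'n) set" and p k :: nat
    and e :: "int \<Rightarrow> nat ^ 'n"
    and V :: "nat \<Rightarrow> ((nat ^ 'n) \<Rightarrow> nat)"
  assumes "finite D"
    and "\<forall>j. \<exists>d\<in>D. d $ j \<noteq> 0"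
    and "prime p"
    and "k \<ge> 1"
    and "\<forall>i\<in>{-1..int k - 1}. e i \<in> Sigma_p D p"
    and "\<forall>i\<in>{0..int k - 1}. Vset D p (e i) (e (i - 1)) \<noteq> {}"
    and "\<forall>i<k. V i \<in> Vset D p (e (int i)) (e (int i - 1))"
  shows "\<exists>r\<ge>k. \<exists>U. minimal D p r U
           \<and> (\<forall>d\<in>D. U d mod p ^ k = (\<Sum>i<k. p ^ i * V i d))
           \<and> (\<forall>i\<in>{int r - int k..int r}. phi D p r U i = e (int r - 1 - i))"
proof -
  have p: "2 \<le> p" using \<open>prime p\<close> by (simp add: prime_ge_2_nat)
  note V = assms(7)[rule_format]
  obtain H m x where P: "walk D p H m x" "x 0 = e (-1)" "x m = e (int k - 1)"
    and weight: "real (digit_weight D H) + (\<Sum>i<k. real (\<Sum>d\<in>D. V i d))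
                   = (real p - 1) * delta D p * real (m + k)"
    using walk_chain[of k D p e "\<lambda>i. real (\<Sum>d\<in>D. V i d)"] Vset_prefix_walk[OF p V] by blast
  have "\<forall>i<k. \<forall>c. p * e (int i) $ c = e (int i - 1) $ c + (\<Sum>d\<in>D. V i d * d $ c)"
    using Vset_step[OF p V] by blast
  moreover have "\<forall>i<k. \<forall>d. V i d < p" "\<forall>i<k. \<forall>d. d \<notin> D \<longrightarrow> V i d = 0"
    using Vset_digits[OF _ V] p by auto
  moreover have "\<forall>i. 0 < e (-1) $ i"
    using Vset_pos[OF V[of 0]] \<open>k \<ge> 1\<close> by simp
  ultimately obtain U where U: "U \<in> Eset D p (m + k)"
    "sU D p U = digit_weight D H + (\<Sum>i<k. \<Sum>d\<in>D. V i d)"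
    "\<forall>d. U d mod p ^ k = (\<Sum>i<k. p ^ i * V i d)"
    "\<forall>i\<in>{int (m + k) - int k..int (m + k)}. phi D p (m + k) U i = e (int (m + k) - 1 - i)"
    using close_walk_by_last_digits[OF p \<open>k \<ge> 1\<close> P] by blast
  have "minimal D p (m + k) U"
    unfolding minimal_def using U(1,2) weight \<open>k \<ge> 1\<close> by (simp add: of_nat_sum algebra_simps)
  then show ?thesis using U(3,4) by (intro exI[of _ "m + k"] exI[of _ U]) auto
qed

end
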